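(* Let $N,k\in\mathbb{N}$, let $W\in\mathbb{R}^{N\times k}$ be a random matrix with entries $W_{i,j}\sim\mathcal{N}(0,2/N)$ and $b\in\mathbb{R}^N$ a random vector with $b_i\sim\mathcal{D}_i$, where each $\mathcal{D}_i$ is a symmetric probability distribution on $\mathbb{R}$, and all entries of $W$ and $b$ are jointly independent. Fix $x\in\mathbb{R}^k\setminus\{0\}$. Then each row of $\sqrt N\,\Delta(Wx+b)\,W\in\mathbb{R}^{N\times k}$ is an isotropic random vector.
   Context: For $v\in\mathbb{R}^N$, $\Delta(v)$ is the $N\times N$ diagonal matrix with diagonal entries $\mathbb{1}_{v_i>0}$. A random vector $X\in\mathbb{R}^k$ is isotropic if $\mathbb{E}[XX^T]=I_k$. *)

theory Defs
  imports "HOL-Probability.Probability"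
begin

text \<open>Vectors in R^n are functions nat => real (entries at indices < n);
  N x k matrices are functions nat => nat => real (entries at indices i < N, j < k).\<close>

definition Delta :: "nat \<Rightarrow> (nat \<Rightarrow> real) \<Rightarrow> nat \<Rightarrow> nat \<Rightarrow> real" where
  "Delta N v i j = (if i = j \<and> i < N \<and> v i > 0 then 1 else 0)"

definition mat_vec :: "nat \<Rightarrow> (nat \<Rightarrow> nat \<Rightarrow> real) \<Rightarrow> (nat \<Rightarrow> real) \<Rightarrow> nat \<Rightarrow> real" where
  "mat_vec k A x i = (\<Sum>j<k. A i j * x j)"

definition mat_mul :: "nat \<Rightarrow> (nat \<Rightarrow> nat \<Rightarrow> real) \<Rightarrow> (nat \<Rightarrow> nat \<Rightarrow> real) \<Rightarrow> nat \<Rightarrow> nat \<Rightarrow> real" where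
  "mat_mul n A B i j = (\<Sum>m<n. A i m * B m j)"

definition isotropic :: "'a measure \<Rightarrow> nat \<Rightarrow> ('a \<Rightarrow> nat \<Rightarrow> real) \<Rightarrow> bool" where
  "isotropic M k X \<longleftrightarrow>
     (\<forall>j<k. \<forall>l<k. integrable M (\<lambda>\<omega>. X \<omega> j * X \<omega> l) \<and>
        (\<integral>\<omega>. X \<omega> j * X \<omega> l \<partial>M) = (if j = l then 1 else 0))"

end

theory Submission
  imports Defs
begin

text \<open>Row i of \<open>sqrt N \<Delta>(Wx + b) W\<close> is \<open>sqrt N [S > 0] (W\<^sub>i\<^sub>1, \<dots>, W\<^sub>i\<^sub>k)\<close> with
  \<open>S = \<Sum>\<^sub>r x\<^sub>r W\<^sub>i\<^sub>r + b\<^sub>i\<close>. Negating all of \<open>W\<^sub>i\<^sub>1, \<dots>, W\<^sub>i\<^sub>k, b\<^sub>i\<close> preserves their joint law,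
  since they are independent and symmetric; it flips the sign of \<open>S\<close> and fixes every product
  \<open>W\<^sub>i\<^sub>j W\<^sub>i\<^sub>l\<close>. Moreover \<open>S = 0\<close> is a null event: some \<open>x\<^sub>r \<noteq> 0\<close>, and the atomless Gaussian
  \<open>W\<^sub>i\<^sub>r\<close> is independent of the other summands. Hence \<open>E([S > 0] W\<^sub>i\<^sub>j W\<^sub>i\<^sub>l)\<close> is half of
  \<open>E(W\<^sub>i\<^sub>j W\<^sub>i\<^sub>l) = (2/N) \<delta>\<^sub>j\<^sub>l\<close>.\<close>

lemma distributed_emeasure_singleton:
  assumes "distributed M lborel X f"
  shows "emeasure (distr M borel X) {a} = 0"
proof -
  have "distr M borel X = distr M lborel X"
    by (rule distr_cong) auto
  also have "\<dots> = density lborel f"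
    using distributed_distr_eq_density[OF assms] .
  finally have "distr M borel X = density lborel f" .
  moreover have "AE t in lborel. t \<in> {a} \<longrightarrow> f t = 0"
    using AE_lborel_singleton[of a] by eventually_elim simp
  then have "{a} \<in> null_sets (density lborel f)"
    using distributed_borel_measurable[OF assms] by (simp add: null_sets_density_iff)
  ultimately show ?thesis by (simp add: null_setsD1)
qed

lemma (in prob_space) distributed_normal_uminus:
  assumes "distributed M lborel X (normal_density 0 \<sigma>)" and "0 < \<sigma>"
  shows "distr M borel X = distr M borel (\<lambda>\<omega>. - X \<omega>)"
proof -
  have neg: "distributed M lborel (\<lambda>\<omega>. 0 + (-1) * X \<omega>) (normal_density (0 + (-1) * 0) (\<bar>-1\<bar> * \<sigma>))"
    by (rule normal_density_affine[OF assms]) simp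
  have "distr M borel X = distr M lborel X"
    by (rule distr_cong) auto
  also have "\<dots> = density lborel (normal_density 0 \<sigma>)"
    using distributed_distr_eq_density[OF assms(1)] .
  also have "\<dots> = distr M lborel (\<lambda>\<omega>. 0 + (-1) * X \<omega>)"
    using distributed_distr_eq_density[OF neg] by simp
  also have "\<dots> = distr M borel (\<lambda>\<omega>. - X \<omega>)"
    by (rule distr_cong) auto
  finally show ?thesis .
qed

lemma (in prob_space) indep_normal_product_integral:
  assumes indep: "indep_vars (\<lambda>_. borel) X J" and J: "p \<in> J" "q \<in> J"
    and normal: "\<And>z. z \<in> {p, q} \<Longrightarrow> distributed M lborel (X z) (normal_density 0 \<sigma>)"
    and "0 < \<sigma>"
  shows "integrable M (\<lambda>\<omega>. X p \<omega> * X q \<omega>)"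
    and "(\<integral>\<omega>. X p \<omega> * X q \<omega> \<partial>M) = (if p = q then \<sigma>\<^sup>2 else 0)"
proof -
  have "integrable M (\<lambda>\<omega>. X p \<omega> * X q \<omega>) \<and>
    (\<integral>\<omega>. X p \<omega> * X q \<omega> \<partial>M) = (if p = q then \<sigma>\<^sup>2 else 0)"
  proof (cases "p = q")
    case True
    have Xp: "distributed M lborel (X p) (normal_density 0 \<sigma>)" using normal by simp
    have "integrable lborel (\<lambda>t. normal_density 0 \<sigma> t * t\<^sup>2)"
      using integrable_normal_moment[OF \<open>0 < \<sigma>\<close>, of 0 2] by simp
    then have "integrable M (\<lambda>\<omega>. (X p \<omega>)\<^sup>2)"
      using distributed_integrable[OF Xp, of "\<lambda>t. t\<^sup>2"] by simp
    moreover have "variance (X p) = \<sigma>\<^sup>2"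
      using normal_distributed_variance[OF \<open>0 < \<sigma>\<close> Xp] .
    ultimately show ?thesis
      using True normal_distributed_expectation[OF \<open>0 < \<sigma>\<close> Xp] by (simp add: power2_eq_square)
  next
    case False
    have indep2: "indep_vars (\<lambda>_. borel) X {p, q}"
      using indep_vars_subset[OF indep] J by simp
    have int: "integrable M (X z)" if "z \<in> {p, q}" for z
      using distributed_integrable[OF normal[OF that], of "\<lambda>t. t"] integrable_normal_moment_nz_1[OF \<open>0 < \<sigma>\<close>]
      by simp
    have mean: "(\<integral>\<omega>. X z \<omega> \<partial>M) = 0" if "z \<in> {p, q}" for z
      using normal_distributed_expectation[OF \<open>0 < \<sigma>\<close> normal[OF that]] .
    show ?thesis
      using indep_vars_lebesgue_integral[OF _ indep2 int] indep_vars_integrable[OF _ indep2 int]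
        mean False by simp
  qed
  then show "integrable M (\<lambda>\<omega>. X p \<omega> * X q \<omega>)"
    and "(\<integral>\<omega>. X p \<omega> * X q \<omega> \<partial>M) = (if p = q then \<sigma>\<^sup>2 else 0)"
    by auto
qed

lemma (in prob_space) indep_vars_distr_uminus_eq:
  fixes X :: "'i \<Rightarrow> 'a \<Rightarrow> real"
  assumes indep: "indep_vars (\<lambda>_. borel) X J"
    and sym: "\<And>z. z \<in> J \<Longrightarrow> distr M borel (X z) = distr M borel (\<lambda>\<omega>. - X z \<omega>)"
  shows "distr M (PiM J (\<lambda>_. borel)) (\<lambda>\<omega>. \<lambda>z\<in>J. - X z \<omega>) =
    distr M (PiM J (\<lambda>_. borel)) (\<lambda>\<omega>. \<lambda>z\<in>J. X z \<omega>)"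
proof (cases "J = {}")
  case False
  have rv: "X z \<in> borel_measurable M" if "z \<in> J" for z
    using indep that by (auto simp: indep_vars_def)
  have indep_neg: "indep_vars (\<lambda>_. borel) (\<lambda>z \<omega>. - X z \<omega>) J"
    using indep_vars_compose2[OF indep, of "\<lambda>_ t. - t"] by simp
  have "distr M (PiM J (\<lambda>_. borel)) (\<lambda>\<omega>. \<lambda>z\<in>J. - X z \<omega>) =
      PiM J (\<lambda>z. distr M borel (\<lambda>\<omega>. - X z \<omega>))"
    using indep_neg False rv by (subst (asm) indep_vars_iff_distr_eq_PiM') auto
  also have "\<dots> = PiM J (\<lambda>z. distr M borel (X z))"
    by (rule PiM_cong) (simp_all add: sym[symmetric])
  also have "\<dots> = distr M (PiM J (\<lambda>_. borel)) (\<lambda>\<omega>. \<lambda>z\<in>J. X z \<omega>)"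
    using indep False rv by (subst (asm) indep_vars_iff_distr_eq_PiM') auto
  finally show ?thesis .
qed (simp add: restrict_def)

lemma emeasure_PiM_hyperplane_eq_0:
  fixes M :: "'i \<Rightarrow> real measure" and c :: "'i \<Rightarrow> real"
  assumes "product_sigma_finite M" and "finite J" and z0: "z0 \<in> J" "c z0 \<noteq> 0"
    and borel: "\<And>z. z \<in> J \<Longrightarrow> sets (M z) = sets borel"
    and atomless: "\<And>a. emeasure (M z0) {a} = 0"
  shows "emeasure (PiM J M) {y \<in> space (PiM J M). (\<Sum>z\<in>J. c z * y z) = 0} = 0"
proof -
  interpret product_sigma_finite M by fact
  define K where "K = J - {z0}"
  have J: "J = insert z0 K" "finite K" "z0 \<notin> K"
    using assms by (auto simp: K_def)
  define A where "A = {y \<in> space (PiM J M). (\<Sum>z\<in>J. c z * y z) = 0}"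
  have "sets (PiM J M) = sets (PiM J (\<lambda>_. borel))"
    by (rule sets_PiM_cong) (simp_all add: borel)
  moreover have "space (PiM J M) = space (PiM J (\<lambda>_. borel :: real measure))"
    using sets_eq_imp_space_eq[OF borel] by (auto simp: space_PiM intro!: PiE_cong)
  ultimately have A_sets: "A \<in> sets (PiM J M)"
    unfolding A_def by simp measurable
  have "emeasure (PiM J M) A = (\<integral>\<^sup>+ y. indicator A y \<partial>PiM J M)"
    using A_sets by simp
  \<comment> \<open>Integrate out coordinate \<open>z0\<close> first: each section of the hyperplane is a single point.\<close>
  also have "\<dots> = (\<integral>\<^sup>+ y. (\<integral>\<^sup>+ t. indicator A (y(z0 := t)) \<partial>M z0) \<partial>PiM K M)"
    using A_sets unfolding J(1) by (intro product_nn_integral_insert J(2,3)) simp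
  also have "\<dots> = (\<integral>\<^sup>+ y. 0 \<partial>PiM K M)"
  proof (rule nn_integral_cong)
    fix y assume y: "y \<in> space (PiM K M)"
    define a where "a = - (\<Sum>z\<in>K. c z * y z) / c z0"
    have "(\<integral>\<^sup>+ t. indicator A (y(z0 := t)) \<partial>M z0) = (\<integral>\<^sup>+ t. indicator {a} t \<partial>M z0)"
    proof (rule nn_integral_cong)
      fix t assume t: "t \<in> space (M z0)"
      have "(\<Sum>z\<in>J. c z * (y(z0 := t)) z) = c z0 * t + (\<Sum>z\<in>K. c z * y z)"
        using J by (auto intro!: sum.cong)
      then have "(\<Sum>z\<in>J. c z * (y(z0 := t)) z) = 0 \<longleftrightarrow> t = a"
        using z0(2) by (auto simp: a_def field_simps)
      moreover have "y(z0 := t) \<in> space (PiM J M)"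
        using y t J by (auto simp: space_PiM PiE_def extensional_def)
      ultimately show "indicator A (y(z0 := t)) = (indicator {a} t :: ennreal)"
        by (auto simp: A_def indicator_def)
    qed
    also have "\<dots> = 0"
      using atomless borel[OF z0(1)] by simp
    finally show "(\<integral>\<^sup>+ t. indicator A (y(z0 := t)) \<partial>M z0) = 0" .
  qed
  finally show ?thesis
    by (simp add: A_def)
qed

lemma (in prob_space) AE_indep_linear_combination_nonzero:
  fixes X :: "'i \<Rightarrow> 'a \<Rightarrow> real" and c :: "'i \<Rightarrow> real"
  assumes "finite J" and indep: "indep_vars (\<lambda>_. borel) X J"
    and z0: "z0 \<in> J" "c z0 \<noteq> 0"
    and atomless: "\<And>a. emeasure (distr M borel (X z0)) {a} = 0"
  shows "AE \<omega> in M. (\<Sum>z\<in>J. c z * X z \<omega>) \<noteq> 0"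
proof -
  \<comment> \<open>Padding \<open>X\<close> by 0 outside \<open>J\<close> makes every factor of the product a probability measure.\<close>
  define X' where "X' z = (if z \<in> J then X z else (\<lambda>_. 0))" for z
  define \<mu> where "\<mu> z = distr M borel (X' z)" for z
  define Y where "Y \<omega> = (\<lambda>z\<in>J. X' z \<omega>)" for \<omega>
  have rv: "X' z \<in> borel_measurable M" for z
    using indep by (auto simp: X'_def indep_vars_def)
  then have Y: "Y \<in> measurable M (PiM J (\<lambda>_. borel))"
    unfolding Y_def by measurable
  have \<mu>: "product_sigma_finite \<mu>"
    unfolding product_sigma_finite_def \<mu>_def
    using rv prob_space_distr prob_space_imp_sigma_finite by blast
  have "indep_vars (\<lambda>_. borel) X' J"
    using indep by (subst indep_vars_cong[where Y=X and N'="\<lambda>_. borel"]) (auto simp: X'_def)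
  then have law: "distr M (PiM J (\<lambda>_. borel)) Y = PiM J \<mu>"
    using z0 rv unfolding \<mu>_def Y_def by (subst (asm) indep_vars_iff_distr_eq_PiM') auto
  define A where "A = {y \<in> space (PiM J \<mu>). (\<Sum>z\<in>J. c z * y z) = 0}"
  have "emeasure (PiM J \<mu>) A = 0"
    unfolding A_def
    by (rule emeasure_PiM_hyperplane_eq_0) (use \<mu> \<open>finite J\<close> z0 atomless in \<open>auto simp: \<mu>_def X'_def\<close>)
  moreover have "A \<in> sets (PiM J (\<lambda>_. borel))"
    unfolding A_def law[symmetric] by simp measurable
  moreover have "{\<omega> \<in> space M. (\<Sum>z\<in>J. c z * X z \<omega>) = 0} = Y -` A \<inter> space M"
    using measurable_space[OF Y] by (auto simp: A_def Y_def X'_def law[symmetric])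
  ultimately have "{\<omega> \<in> space M. (\<Sum>z\<in>J. c z * X z \<omega>) = 0} \<in> null_sets M"
    using emeasure_distr[OF Y] measurable_sets[OF Y] law by auto
  then show ?thesis
    by (rule AE_I') auto
qed

lemma (in prob_space) integral_indep_symmetric_gate_half:
  fixes X :: "'i \<Rightarrow> 'a \<Rightarrow> real" and c :: "'i \<Rightarrow> real"
  assumes indep: "indep_vars (\<lambda>_. borel) X J"
    and sym: "\<And>z. z \<in> J \<Longrightarrow> distr M borel (X z) = distr M borel (\<lambda>\<omega>. - X z \<omega>)"
    and nonzero: "AE \<omega> in M. (\<Sum>z\<in>J. c z * X z \<omega>) \<noteq> 0"
    and pq: "p \<in> J" "q \<in> J" and int: "integrable M (\<lambda>\<omega>. X p \<omega> * X q \<omega>)"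
  shows "integrable M (\<lambda>\<omega>. if (\<Sum>z\<in>J. c z * X z \<omega>) > 0 then X p \<omega> * X q \<omega> else 0)"
    and "(\<integral>\<omega>. (if (\<Sum>z\<in>J. c z * X z \<omega>) > 0 then X p \<omega> * X q \<omega> else 0) \<partial>M) =
      (\<integral>\<omega>. X p \<omega> * X q \<omega> \<partial>M) / 2"
proof -
  define S where "S \<omega> = (\<Sum>z\<in>J. c z * X z \<omega>)" for \<omega>
  define G where "G y = (if (\<Sum>z\<in>J. c z * y z) > 0 then y p * y q else 0)" for y :: "'i \<Rightarrow> real"
  have rv[measurable]: "X z \<in> borel_measurable M" if "z \<in> J" for z
    using indep that by (auto simp: indep_vars_def)
  have [measurable]: "X p \<in> borel_measurable M" "X q \<in> borel_measurable M"
    using pq by (auto intro: rv)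
  have S[measurable]: "S \<in> borel_measurable M"
    unfolding S_def by (intro borel_measurable_sum borel_measurable_times) (auto intro: rv)
  have Y: "(\<lambda>\<omega>. \<lambda>z\<in>J. X z \<omega>) \<in> measurable M (PiM J (\<lambda>_. borel))"
    and Y_neg: "(\<lambda>\<omega>. \<lambda>z\<in>J. - X z \<omega>) \<in> measurable M (PiM J (\<lambda>_. borel))"
    by (auto intro!: measurable_restrict rv borel_measurable_uminus)
  have G: "G \<in> borel_measurable (PiM J (\<lambda>_. borel))"
    unfolding G_def using pq by measurable
  have int_pos: "integrable M (\<lambda>\<omega>. if S \<omega> > 0 then X p \<omega> * X q \<omega> else 0)"
    by (rule Bochner_Integration.integrable_bound[OF int]) auto
  have int_neg: "integrable M (\<lambda>\<omega>. if S \<omega> < 0 then X p \<omega> * X q \<omega> else 0)"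
    by (rule Bochner_Integration.integrable_bound[OF int]) auto
  have "(\<integral>\<omega>. (if S \<omega> > 0 then X p \<omega> * X q \<omega> else 0) \<partial>M) = (\<integral>\<omega>. G (\<lambda>z\<in>J. X z \<omega>) \<partial>M)"
    using pq by (intro Bochner_Integration.integral_cong) (auto simp: G_def S_def)
  also have "\<dots> = (\<integral>y. G y \<partial>distr M (PiM J (\<lambda>_. borel)) (\<lambda>\<omega>. \<lambda>z\<in>J. X z \<omega>))"
    using integral_distr[OF Y G] by simp
  also have "\<dots> = (\<integral>y. G y \<partial>distr M (PiM J (\<lambda>_. borel)) (\<lambda>\<omega>. \<lambda>z\<in>J. - X z \<omega>))"
    using indep_vars_distr_uminus_eq[OF indep sym] by simp
  also have "\<dots> = (\<integral>\<omega>. G (\<lambda>z\<in>J. - X z \<omega>) \<partial>M)"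
    using integral_distr[OF Y_neg G] by simp
  also have "\<dots> = (\<integral>\<omega>. (if S \<omega> < 0 then X p \<omega> * X q \<omega> else 0) \<partial>M)"
    using pq by (intro Bochner_Integration.integral_cong) (auto simp: G_def S_def sum_negf)
  finally have pos_eq_neg: "(\<integral>\<omega>. (if S \<omega> > 0 then X p \<omega> * X q \<omega> else 0) \<partial>M) =
      (\<integral>\<omega>. (if S \<omega> < 0 then X p \<omega> * X q \<omega> else 0) \<partial>M)" .
  have "(\<integral>\<omega>. X p \<omega> * X q \<omega> \<partial>M) =
      (\<integral>\<omega>. (if S \<omega> > 0 then X p \<omega> * X q \<omega> else 0) + (if S \<omega> < 0 then X p \<omega> * X q \<omega> else 0) \<partial>M)"
    using nonzero by (intro integral_cong_AE) (auto simp: S_def elim!: eventually_mono)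
  also have "\<dots> = 2 * (\<integral>\<omega>. (if S \<omega> > 0 then X p \<omega> * X q \<omega> else 0) \<partial>M)"
    using int_pos int_neg pos_eq_neg by simp
  finally show "(\<integral>\<omega>. (if (\<Sum>z\<in>J. c z * X z \<omega>) > 0 then X p \<omega> * X q \<omega> else 0) \<partial>M) =
      (\<integral>\<omega>. X p \<omega> * X q \<omega> \<partial>M) / 2"
    by (simp add: S_def)
  show "integrable M (\<lambda>\<omega>. if (\<Sum>z\<in>J. c z * X z \<omega>) > 0 then X p \<omega> * X q \<omega> else 0)"
    using int_pos by (simp add: S_def)
qed

lemma (in prob_space) isotropic_gated_normal_row:
  fixes X :: "'i \<Rightarrow> 'a \<Rightarrow> real" and w :: "nat \<Rightarrow> 'i" and \<beta> :: 'i and x :: "nat \<Rightarrow> real"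
  assumes indep: "indep_vars (\<lambda>_. borel) X (insert \<beta> (w ` {..<k}))"
    and w: "inj_on w {..<k}" "\<beta> \<notin> w ` {..<k}"
    and normal: "\<And>j. j < k \<Longrightarrow> distributed M lborel (X (w j)) (normal_density 0 \<sigma>)"
    and "0 < \<sigma>"
    and sym_\<beta>: "distr M borel (X \<beta>) = distr M borel (\<lambda>\<omega>. - X \<beta> \<omega>)"
    and "\<exists>j<k. x j \<noteq> 0"
  shows "isotropic M k (\<lambda>\<omega> j. sqrt 2 / \<sigma> *
    (if (\<Sum>r<k. x r * X (w r) \<omega>) + X \<beta> \<omega> > 0 then X (w j) \<omega> else 0))"
proof -
  define J where "J = insert \<beta> (w ` {..<k})"
  define c where "c z = (if z = \<beta> then 1 else x (the_inv_into {..<k} w z))" for z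
  have indep_J: "indep_vars (\<lambda>_. borel) X J"
    using indep unfolding J_def .
  have S_eq: "(\<Sum>z\<in>J. c z * X z \<omega>) = (\<Sum>r<k. x r * X (w r) \<omega>) + X \<beta> \<omega>" for \<omega>
  proof -
    have "(\<Sum>z\<in>w ` {..<k}. c z * X z \<omega>) = (\<Sum>r<k. x r * X (w r) \<omega>)"
      using w by (auto simp: sum.reindex c_def the_inv_into_f_f intro!: sum.cong)
    then show ?thesis
      using w(2) by (simp add: J_def c_def)
  qed
  obtain r0 where r0: "r0 < k" "x r0 \<noteq> 0"
    using \<open>\<exists>j<k. x j \<noteq> 0\<close> by blast
  have nonzero: "AE \<omega> in M. (\<Sum>z\<in>J. c z * X z \<omega>) \<noteq> 0"
  proof (rule AE_indep_linear_combination_nonzero[OF _ indep_J])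
    show "c (w r0) \<noteq> 0"
      using r0 w by (auto simp: c_def the_inv_into_f_f)
  qed (use r0 distributed_emeasure_singleton[OF normal] in \<open>auto simp: J_def\<close>)
  have sym_J: "distr M borel (X z) = distr M borel (\<lambda>\<omega>. - X z \<omega>)" if "z \<in> J" for z
    using that sym_\<beta> distributed_normal_uminus[OF normal \<open>0 < \<sigma>\<close>] by (auto simp: J_def)
  show ?thesis
    unfolding isotropic_def
  proof (intro allI impI conjI)
    fix j l assume jl: "j < k" "l < k"
    have wJ: "w j \<in> J" "w l \<in> J" and "w j = w l \<longleftrightarrow> j = l"
      using jl w by (auto simp: J_def inj_on_eq_iff)
    moreover have "distributed M lborel (X z) (normal_density 0 \<sigma>)" if "z \<in> {w j, w l}" for z
      using that normal jl by auto
    ultimately have moments: "integrable M (\<lambda>\<omega>. X (w j) \<omega> * X (w l) \<omega>)"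
        "(\<integral>\<omega>. X (w j) \<omega> * X (w l) \<omega> \<partial>M) = (if j = l then \<sigma>\<^sup>2 else 0)"
      using indep_normal_product_integral[OF indep_J wJ _ \<open>0 < \<sigma>\<close>] by simp_all
    note gate_half = integral_indep_symmetric_gate_half[OF indep_J sym_J nonzero wJ moments(1)]
    have entries: "sqrt 2 / \<sigma> * (if (\<Sum>r<k. x r * X (w r) \<omega>) + X \<beta> \<omega> > 0 then X (w j) \<omega> else 0) *
        (sqrt 2 / \<sigma> * (if (\<Sum>r<k. x r * X (w r) \<omega>) + X \<beta> \<omega> > 0 then X (w l) \<omega> else 0)) =
      2 / \<sigma>\<^sup>2 * (if (\<Sum>z\<in>J. c z * X z \<omega>) > 0 then X (w j) \<omega> * X (w l) \<omega> else 0)" for \<omega>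
      by (simp add: S_eq power2_eq_square)
    show "integrable M (\<lambda>\<omega>. sqrt 2 / \<sigma> * (if (\<Sum>r<k. x r * X (w r) \<omega>) + X \<beta> \<omega> > 0 then X (w j) \<omega> else 0) *
        (sqrt 2 / \<sigma> * (if (\<Sum>r<k. x r * X (w r) \<omega>) + X \<beta> \<omega> > 0 then X (w l) \<omega> else 0)))"
      unfolding entries using gate_half(1) by simp
    show "(\<integral>\<omega>. sqrt 2 / \<sigma> * (if (\<Sum>r<k. x r * X (w r) \<omega>) + X \<beta> \<omega> > 0 then X (w j) \<omega> else 0) *
        (sqrt 2 / \<sigma> * (if (\<Sum>r<k. x r * X (w r) \<omega>) + X \<beta> \<omega> > 0 then X (w l) \<omega> else 0)) \<partial>M) =
      (if j = l then 1 else 0)"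
      unfolding entries using gate_half(2) moments(2) \<open>0 < \<sigma>\<close> by (auto split: if_splits)
  qed
qed

lemma mat_mul_Delta:
  assumes "i < N"
  shows "mat_mul N (Delta N v) A i j = (if v i > 0 then A i j else 0)"
  using assms by (auto simp: mat_mul_def Delta_def if_distrib[of "\<lambda>t. t * _"] cong: if_cong)

theorem lemma6p3:
  fixes M :: "'a measure" and N k :: nat
    and W :: "nat \<Rightarrow> nat \<Rightarrow> 'a \<Rightarrow> real"
    and b :: "nat \<Rightarrow> 'a \<Rightarrow> real"
    and x :: "nat \<Rightarrow> real"
  assumes "prob_space M"
    and W_normal: "\<And>i j. i < N \<Longrightarrow> j < k \<Longrightarrow>
           distributed M lborel (W i j) (normal_density 0 (sqrt (2 / real N)))"
    and b_rv: "\<And>i. i < N \<Longrightarrow> b i \<in> borel_measurable M"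
    and b_symm: "\<And>i. i < N \<Longrightarrow> distr M borel (b i) = distr M borel (\<lambda>\<omega>. - b i \<omega>)"
    and indep: "prob_space.indep_vars M (\<lambda>_. borel)
           (\<lambda>z. case z of Inl (i, j) \<Rightarrow> W i j | Inr i \<Rightarrow> b i)
           ({(i, j). i < N \<and> j < k} <+> {..<N})"
    and x_nonzero: "\<exists>j<k. x j \<noteq> 0"
  shows "\<forall>i<N. isotropic M k (\<lambda>\<omega> j.
           sqrt (real N) * mat_mul N
              (Delta N (\<lambda>m. mat_vec k (\<lambda>r c. W r c \<omega>) x m + b m \<omega>))
              (\<lambda>r c. W r c \<omega>) i j)"
proof (intro allI impI)
  interpret prob_space M by fact
  fix i assume "i < N"
  define X where "X = (\<lambda>z. case z of Inl (i, j) \<Rightarrow> W i j | Inr i \<Rightarrow> b i)"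
  have "isotropic M k (\<lambda>\<omega> j. sqrt 2 / sqrt (2 / real N) *
    (if (\<Sum>r<k. x r * X (Inl (i, r)) \<omega>) + X (Inr i) \<omega> > 0 then X (Inl (i, j)) \<omega> else 0))"
  proof (rule isotropic_gated_normal_row)
    show "indep_vars (\<lambda>_. borel) X (insert (Inr i) ((\<lambda>r. Inl (i, r)) ` {..<k}))"
      using \<open>i < N\<close> by (intro indep_vars_subset[OF indep[folded X_def]]) auto
  qed (use \<open>i < N\<close> W_normal b_symm x_nonzero in \<open>auto simp: X_def inj_on_def\<close>)
  moreover have "sqrt (real N) * mat_mul N (Delta N (\<lambda>m. mat_vec k (\<lambda>r c. W r c \<omega>) x m + b m \<omega>))
      (\<lambda>r c. W r c \<omega>) i j = sqrt 2 / sqrt (2 / real N) *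
    (if (\<Sum>r<k. x r * X (Inl (i, r)) \<omega>) + X (Inr i) \<omega> > 0 then X (Inl (i, j)) \<omega> else 0)" for \<omega> j
    using \<open>i < N\<close> by (simp add: mat_mul_Delta mat_vec_def X_def mult.commute real_sqrt_divide)
  ultimately show "isotropic M k (\<lambda>\<omega> j. sqrt (real N) * mat_mul N
      (Delta N (\<lambda>m. mat_vec k (\<lambda>r c. W r c \<omega>) x m + b m \<omega>)) (\<lambda>r c. W r c \<omega>) i j)"
    by simp
qed

end
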